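(* Let $\mathcal{A}$ be a prime Banach algebra with a nonzero idempotent $p$ (i.e. $p^2=p\neq0$) such that $\mathcal{A}p$ is finite dimensional. Then every derivation on $\mathcal{A}$ is continuous.
   Context: A derivation on $\mathcal{A}$ is a linear map $\delta:\mathcal{A}\to\mathcal{A}$ with $\delta(ab)=a\delta(b)+\delta(a)b$ for all $a,b\in\mathcal{A}$; it is not assumed continuous. *)

theory Defs
  imports "HOL-Analysis.Analysis"
begin

definition derivation :: "('a::real_normed_algebra \<Rightarrow> 'a) \<Rightarrow> bool" where
  "derivation \<delta> \<longleftrightarrow> linear \<delta> \<and> (\<forall>a b. \<delta> (a * b) = a * \<delta> b + \<delta> a * b)"

definition prime_algebra :: "'a::real_normed_algebra itself \<Rightarrow> bool" where
  "prime_algebra _ \<longleftrightarrow> (\<forall>a b::'a. (\<forall>x. a * x * b = 0) \<longrightarrow> a = 0 \<or> b = 0)"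

definition fin_dim_subspace :: "'a::real_vector set \<Rightarrow> bool" where
  "fin_dim_subspace S \<longleftrightarrow> (\<exists>B. finite B \<and> span B = S)"

end

theory Submission
  imports Defs
begin

(* Primeness makes \<A> finite dimensional: if a x p = 0 for all x then a = 0, so a is determined
   by left multiplication on the finite-dimensional space \<A>p, and finitely many coordinate
   functionals of the maps a \<mapsto> a e (e ranging over a basis of \<A>p) separate the points of \<A>.
   On a finite-dimensional normed space every linear map is bounded: by induction on a basis,
   each coordinate is bounded by a multiple of the norm, the new basis vector having positive
   distance from the span of the others, which is closed by the induction hypothesis.
   Hence only linearity of the derivation is used, and neither p * p = p nor completeness. *)

lemma fin_dim_subspace_obtain_basis:
  assumes "fin_dim_subspace S"
  obtains B where "finite B" "independent B" "span B = S"
proof -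
  obtain B0 where "finite B0" "span B0 = S"
    using assms by (auto simp: fin_dim_subspace_def)
  moreover obtain B where "B \<subseteq> B0" "independent B" "B0 \<subseteq> span B"
    using maximal_independent_subset by blast
  ultimately show thesis
    by (metis that finite_subset span_eq span_superset subset_trans)
qed

lemma fin_dim_subspace_if_separating_functionals:
  fixes F :: "('a::real_vector \<Rightarrow> real) set"
  assumes "finite F" and "\<forall>f\<in>F. linear f" and "subspace W"
    and "\<forall>w\<in>W. (\<forall>f\<in>F. f w = 0) \<longrightarrow> w = 0"
  shows "fin_dim_subspace W"
  using assms
proof (induction F arbitrary: W rule: finite_induct)
  case empty
  then have "W = span {}" using subspace_0 by (auto simp: span_empty)
  then show ?case by (auto simp: fin_dim_subspace_def)
next
  case (insert f F)
  have lin_f: "linear f" using insert.prems(1) by simp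
  define W' where "W' = W \<inter> {x. f x = 0}"
  have "subspace W'"
    using insert.prems(2) lin_f
    by (auto simp: W'_def subspace_def linear_0 linear_add linear_scale)
  moreover have "\<forall>w\<in>W'. (\<forall>g\<in>F. g w = 0) \<longrightarrow> w = 0"
    using insert.prems(3) by (auto simp: W'_def)
  ultimately have "fin_dim_subspace W'"
    using insert.IH insert.prems(1) by simp
  then obtain T where T: "finite T" "span T = W'"
    by (auto simp: fin_dim_subspace_def)
  show ?case
  proof (cases "\<forall>w\<in>W. f w = 0")
    case True
    then have "W' = W" by (auto simp: W'_def)
    then show ?thesis using T by (auto simp: fin_dim_subspace_def)
  next
    case False
    then obtain w0 where w0: "w0 \<in> W" "f w0 \<noteq> 0" by auto
    have "span (insert w0 T) \<subseteq> W"
      using w0(1) T(2) insert.prems(2) span_superset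
      by (intro span_minimal) (auto simp: W'_def)
    moreover have "w \<in> span (insert w0 T)" if w: "w \<in> W" for w
    proof -
      define c where "c = f w / f w0"
      have "w - c *\<^sub>R w0 \<in> W'"
        using w w0 insert.prems(2) lin_f
        by (simp add: W'_def c_def subspace_diff subspace_scale linear_diff linear_scale)
      then have "w - c *\<^sub>R w0 \<in> span (insert w0 T)"
        using T(2) span_mono[of T "insert w0 T"] by auto
      moreover have "c *\<^sub>R w0 \<in> span (insert w0 T)"
        by (simp add: span_base span_scale)
      ultimately show ?thesis
        using span_add by fastforce
    qed
    ultimately have "span (insert w0 T) = W" by blast
    then show ?thesis using T(1) by (auto simp: fin_dim_subspace_def)
  qed
qed

lemma prime_algebra_fin_dim_if_fin_dim_left_ideal:
  fixes p :: "'a::real_normed_algebra"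
  assumes "prime_algebra TYPE('a)" and "p \<noteq> 0"
    and "fin_dim_subspace (range (\<lambda>a. a * p))"
  shows "fin_dim_subspace (UNIV :: 'a set)"
proof -
  obtain D where D: "finite D" "independent D" "span D = range (\<lambda>a. a * p)"
    using assms(3) by (rule fin_dim_subspace_obtain_basis)
  have mult_in_span: "a * e \<in> span D" if "e \<in> D" for a e
  proof -
    obtain x where "e = x * p" using \<open>e \<in> D\<close> D(3) span_superset by blast
    then show ?thesis using D(3) by (simp add: mult.assoc[symmetric])
  qed
  define F where "F = (\<lambda>(e, d) a. representation D (a * e) d) ` (D \<times> D)"
  have "linear f" if "f \<in> F" for f
  proof -
    obtain e d where "e \<in> D" and f: "f = (\<lambda>a. representation D (a * e) d)"
      using \<open>f \<in> F\<close> by (auto simp: F_def)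
    show ?thesis
      unfolding f using D(2) mult_in_span[OF \<open>e \<in> D\<close>]
      by (intro linearI) (simp_all add: distrib_right representation_add representation_scale)
  qed
  moreover have "a = 0" if "\<forall>f\<in>F. f a = 0" for a :: 'a
  proof -
    have "a * e = 0" if "e \<in> D" for e
    proof -
      have "a * e = (\<Sum>d\<in>D. representation D (a * e) d *\<^sub>R d)"
        using sum_representation_eq[OF D(2) mult_in_span[OF \<open>e \<in> D\<close>] D(1) order_refl] by simp
      also have "\<dots> = 0"
        using \<open>\<forall>f\<in>F. f a = 0\<close> \<open>e \<in> D\<close> by (simp add: F_def)
      finally show ?thesis .
    qed
    then have "a * y = 0" if "y \<in> span D" for y
      using linear_eq_0_on_span[OF bounded_linear.linear[OF bounded_linear_mult_right] _ that] by blast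
    then have "\<forall>x. a * x * p = 0"
      using D(3) by (simp add: mult.assoc)
    then show ?thesis
      using assms(1,2) by (auto simp: prime_algebra_def)
  qed
  ultimately show ?thesis
    using D(1) by (intro fin_dim_subspace_if_separating_functionals[of F]) (auto simp: F_def)
qed

lemma closed_span_if_coefficients_bounded:
  fixes B :: "'a::real_normed_vector set"
  assumes "finite B"
    and coeff_bound: "\<forall>c. \<forall>v\<in>B. \<bar>c v\<bar> \<le> C * norm (\<Sum>w\<in>B. c w *\<^sub>R w)"
  shows "closed (span B)"
  unfolding closed_sequential_limits
proof (intro allI impI, elim conjE)
  fix x l assume "\<forall>n. x n \<in> span B" and "x \<longlonglongrightarrow> l"
  then have "\<forall>n. \<exists>c. x n = (\<Sum>v\<in>B. c v *\<^sub>R v)"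
    using span_finite[OF assms(1)] by blast
  then obtain u where u: "\<And>n. x n = (\<Sum>v\<in>B. u n v *\<^sub>R v)"
    by metis
  define K where "K = \<bar>C\<bar> + 1"
  have "K > 0" by (simp add: K_def)
  have "Cauchy (\<lambda>n. u n v)" if "v \<in> B" for v
  proof (rule CauchyI)
    fix e :: real assume "e > 0"
    then obtain M where M: "\<forall>m\<ge>M. \<forall>n\<ge>M. norm (x m - x n) < e / K"
      using \<open>x \<longlonglongrightarrow> l\<close> \<open>K > 0\<close> by (meson CauchyD LIMSEQ_imp_Cauchy divide_pos_pos)
    have "norm (u m v - u n v) < e" if "m \<ge> M" "n \<ge> M" for m n
    proof -
      have "x m - x n = (\<Sum>w\<in>B. (u m w - u n w) *\<^sub>R w)"
        by (simp add: u sum_subtractf scaleR_diff_left)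
      then have "\<bar>u m v - u n v\<bar> \<le> C * norm (x m - x n)"
        using coeff_bound[rule_format, OF \<open>v \<in> B\<close>, of "\<lambda>w. u m w - u n w"] by simp
      also have "\<dots> \<le> K * norm (x m - x n)"
        by (intro mult_right_mono) (auto simp: K_def)
      also have "\<dots> < K * (e / K)"
        using M that \<open>K > 0\<close> by (intro mult_strict_left_mono) auto
      finally show ?thesis using \<open>K > 0\<close> by simp
    qed
    then show "\<exists>M. \<forall>m\<ge>M. \<forall>n\<ge>M. norm (u m v - u n v) < e" by blast
  qed
  then have "\<forall>v\<in>B. \<exists>l. (\<lambda>n. u n v) \<longlonglongrightarrow> l"
    by (simp add: Cauchy_convergent_iff convergent_def)
  then obtain d where "\<forall>v\<in>B. (\<lambda>n. u n v) \<longlonglongrightarrow> d v"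
    by (rule bchoice[elim_format]) blast
  then have "x \<longlonglongrightarrow> (\<Sum>v\<in>B. d v *\<^sub>R v)"
    unfolding u by (auto intro!: tendsto_sum tendsto_scaleR)
  then have "l = (\<Sum>v\<in>B. d v *\<^sub>R v)"
    using \<open>x \<longlonglongrightarrow> l\<close> LIMSEQ_unique by blast
  then show "l \<in> span B"
    by (simp add: span_sum span_scale span_base)
qed

lemma abs_scaleR_infdist_span_le_norm:
  fixes b u :: "'a::real_normed_vector"
  assumes "u \<in> span S"
  shows "\<bar>t\<bar> * infdist b (span S) \<le> norm (t *\<^sub>R b + u)"
proof (cases "t = 0")
  case False
  have "- (1 / t) *\<^sub>R u \<in> span S"
    using assms by (rule span_scale)
  then have "infdist b (span S) \<le> norm (b + (1 / t) *\<^sub>R u)"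
    using infdist_le by (fastforce simp: dist_norm)
  then have "\<bar>t\<bar> * infdist b (span S) \<le> norm (t *\<^sub>R (b + (1 / t) *\<^sub>R u))"
    by (simp add: mult_left_mono)
  also have "t *\<^sub>R (b + (1 / t) *\<^sub>R u) = t *\<^sub>R b + u"
    using False by (simp add: scaleR_add_right)
  finally show ?thesis .
qed simp

lemma independent_coefficients_bounded:
  fixes B :: "'a::real_normed_vector set"
  assumes "finite B" and "independent B"
  shows "\<exists>C\<ge>0. \<forall>c. \<forall>v\<in>B. \<bar>c v\<bar> \<le> C * norm (\<Sum>w\<in>B. c w *\<^sub>R w)"
  using assms
proof (induction B rule: finite_induct)
  case empty
  show ?case by auto
next
  case (insert b B)
  have "independent B" and "b \<notin> span B"
    using insert.prems insert.hyps by (auto simp: independent_insert)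
  then obtain C where "C \<ge> 0" and C: "\<forall>c. \<forall>v\<in>B. \<bar>c v\<bar> \<le> C * norm (\<Sum>w\<in>B. c w *\<^sub>R w)"
    using insert.IH by blast
  define e where "e = infdist b (span B)"
  have "span B \<noteq> {}"
    using span_zero by blast
  then have "e > 0"
    using closed_span_if_coefficients_bounded[OF insert.hyps(1) C] \<open>b \<notin> span B\<close>
      in_closed_iff_infdist_zero[of "span B" b] infdist_nonneg[of b "span B"]
    by (auto simp: e_def span_zero)
  define C' where "C' = max (1 / e) (C * (1 + norm b / e))"
  have "\<bar>c v\<bar> \<le> C' * norm (\<Sum>w\<in>insert b B. c w *\<^sub>R w)" if "v \<in> insert b B" for c v
  proof -
    define u where "u = (\<Sum>w\<in>B. c w *\<^sub>R w)"
    define s where "s = (\<Sum>w\<in>insert b B. c w *\<^sub>R w)"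
    have s: "s = c b *\<^sub>R b + u"
      using insert.hyps by (simp add: s_def u_def)
    have "u \<in> span B"
      by (simp add: u_def span_sum span_scale span_base)
    then have "\<bar>c b\<bar> * e \<le> norm s"
      unfolding s e_def by (rule abs_scaleR_infdist_span_le_norm)
    then have cb: "\<bar>c b\<bar> \<le> norm s / e"
      using \<open>e > 0\<close> by (simp add: field_simps)
    show ?thesis
    proof (cases "v = b")
      case True
      have "norm s / e = (1 / e) * norm s"
        by simp
      also have "\<dots> \<le> C' * norm s"
        by (intro mult_right_mono) (auto simp: C'_def)
      finally have "norm s / e \<le> C' * norm s" .
      then show ?thesis using True cb by (simp add: s_def)
    next
      case False
      have "norm u \<le> norm s + \<bar>c b\<bar> * norm b"
        using norm_triangle_ineq4[of s "c b *\<^sub>R b"] by (simp add: s)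
      also have "\<dots> \<le> norm s + norm s / e * norm b"
        using mult_right_mono[OF cb norm_ge_zero[of b]] by simp
      finally have "norm u \<le> (1 + norm b / e) * norm s"
        by (simp add: algebra_simps)
      then have "\<bar>c v\<bar> \<le> C * ((1 + norm b / e) * norm s)"
        using C False that \<open>C \<ge> 0\<close> unfolding u_def
        by (meson dual_order.trans insertE mult_left_mono)
      also have "\<dots> = C * (1 + norm b / e) * norm s"
        by simp
      also have "\<dots> \<le> C' * norm s"
        by (intro mult_right_mono) (auto simp: C'_def)
      finally show ?thesis by (simp add: s_def)
    qed
  qed
  moreover have "C' \<ge> 0"
    using \<open>e > 0\<close> by (simp add: C'_def le_max_iff_disj)
  ultimately show ?case by blast
qed

lemma bounded_linear_if_fin_dim:
  fixes f :: "'a::real_normed_vector \<Rightarrow> 'b::real_normed_vector"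
  assumes "fin_dim_subspace (UNIV :: 'a set)" and "linear f"
  shows "bounded_linear f"
proof -
  obtain B :: "'a set" where B: "finite B" "independent B" "span B = UNIV"
    using assms(1) by (rule fin_dim_subspace_obtain_basis)
  obtain C where C: "\<forall>c. \<forall>v\<in>B. \<bar>c v\<bar> \<le> C * norm (\<Sum>w\<in>B. c w *\<^sub>R w)"
    using independent_coefficients_bounded[OF B(1,2)] by blast
  define K where "K = C * (\<Sum>v\<in>B. norm (f v))"
  have "norm (f a) \<le> norm a * K" for a
  proof -
    define r where "r = representation B a"
    have a: "(\<Sum>v\<in>B. r v *\<^sub>R v) = a"
      unfolding r_def using sum_representation_eq[OF B(2) _ B(1) order_refl] B(3) by simp
    have "norm (f a) = norm (\<Sum>v\<in>B. r v *\<^sub>R f v)"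
      using a assms(2) by (metis (no_types, lifting) linear_scale linear_sum sum.cong)
    also have "\<dots> \<le> (\<Sum>v\<in>B. \<bar>r v\<bar> * norm (f v))"
      using norm_sum[of "\<lambda>v. r v *\<^sub>R f v" B] by simp
    also have "\<dots> \<le> (\<Sum>v\<in>B. C * norm a * norm (f v))"
      using C a by (intro sum_mono mult_right_mono) auto
    also have "\<dots> = norm a * K"
      by (simp add: K_def sum_distrib_left mult_ac)
    finally show ?thesis .
  qed
  then show ?thesis
    using assms(2) by (auto intro!: bounded_linear_intro simp: linear_add linear_scale)
qed

theorem proposition2p9:
  fixes p :: "'a::{real_normed_algebra, banach}"
    and \<delta> :: "'a \<Rightarrow> 'a"
  assumes "prime_algebra TYPE('a)"
    and "p * p = p" and "p \<noteq> 0"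
    and "fin_dim_subspace (range (\<lambda>a. a * p))"
    and "derivation \<delta>"
  shows "continuous_on UNIV \<delta>"
proof -
  have "fin_dim_subspace (UNIV :: 'a set)"
    using assms(1,3,4) by (rule prime_algebra_fin_dim_if_fin_dim_left_ideal)
  moreover have "linear \<delta>"
    using assms(5) by (simp add: derivation_def)
  ultimately have "bounded_linear \<delta>"
    by (rule bounded_linear_if_fin_dim)
  then show ?thesis
    by (rule linear_continuous_on)
qed

end
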